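(* Let $0<s<1$, let $K$ satisfy the standing assumptions below together with condition (B) for some $\sigma\in(0,s)$, let $1+\sigma-s<p<\infty$, and let $n$ be a nonnegative integer. There is a constant $C>0$ (independent of $f$ and $z$) such that for every $f\in B_p^K(s)$ and every $z\in\mathbb{D}$, $$|f^{(n)}(z)|\le C\,\|f\|_{B_p^K(s)}\left(\frac{K(1-|z|^2)}{(1-|z|^2)^{pn+s}}\right)^{1/p}.$$
   Context: $\mathbb{D}$ is the open unit disc, $H(\mathbb{D})$ the analytic functions on $\mathbb{D}$, $dA$ the normalized area measure, $\varphi_a(z)=\frac{a-z}{1-\bar az}$. Standing assumptions: $K:[0,\infty)\to[0,\infty)$ is nondecreasing, right-continuous, not identically zero, and with $\varphi_K(x)=\sup_{0<t\le 1}K(tx)/K(t)$ satisfies $\int_0^1\frac{\varphi_K(x)}{x}\,dx<\infty$. Condition (B) for $\sigma>0$: $\int_1^\infty\frac{\varphi_K(x)}{x^{1+\sigma}}\,dx<\infty$. $\|f\|_{B_p(s)}^p=|f(0)|^p+\int_{\mathbb{D}}|f'(z)|^p(1-|z|^2)^{p-2+s}\,dA(z)$ and $\|f\|_{B_p^K(s)}^p=|f(0)|^p+\sup_{a\in\mathbb{D}}\frac{(1-|a|^2)^s}{K(1-|a|^2)}\|f\circ\varphi_a-f(a)\|_{B_p(s)}^p$; $B_p^K(s)$ is the set of $f\in H(\mathbb{D})$ with this quantity finite. *)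

theory Defs
  imports "HOL-Analysis.Analysis"
begin

definition udisc :: "complex set" where
  "udisc = ball 0 1"

definition disc_aut :: "complex \<Rightarrow> complex \<Rightarrow> complex" where
  "disc_aut a z = (a - z) / (1 - cnj a * z)"

definition phiK :: "(real \<Rightarrow> real) \<Rightarrow> real \<Rightarrow> ennreal" where
  "phiK K x = (SUP t\<in>{0<..1}. ennreal (K (t * x) / K t))"

definition standing_K :: "(real \<Rightarrow> real) \<Rightarrow> bool" where
  "standing_K K \<longleftrightarrow>
     (\<forall>x\<ge>0. K x \<ge> 0) \<and> mono_on {0..} K \<and>
     (\<forall>x\<ge>0. continuous (at_right x) K) \<and> (\<exists>x\<ge>0. K x \<noteq> 0) \<and>
     (\<forall>t>0. K t > 0) \<and>
     (\<integral>\<^sup>+ x. indicator {0<..<1} x * phiK K x / ennreal x \<partial>lborel) < \<infinity>"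

definition condB :: "(real \<Rightarrow> real) \<Rightarrow> real \<Rightarrow> bool" where
  "condB K \<sigma> \<longleftrightarrow>
     (\<integral>\<^sup>+ x. indicator {1<..} x * phiK K x / ennreal (x powr (1 + \<sigma>)) \<partial>lborel) < \<infinity>"

text \<open>p-th power of the B_p(s) norm, with normalized area measure dA = dx dy / pi.\<close>
definition Bp_normp :: "real \<Rightarrow> real \<Rightarrow> (complex \<Rightarrow> complex) \<Rightarrow> ennreal" where
  "Bp_normp p s f = ennreal (cmod (f 0) powr p) +
     (\<integral>\<^sup>+ z. indicator udisc z *
        ennreal (cmod (deriv f z) powr p * (1 - (cmod z)\<^sup>2) powr (p - 2 + s) / pi) \<partial>lborel)"

definition BpK_normp :: "(real \<Rightarrow> real) \<Rightarrow> real \<Rightarrow> real \<Rightarrow> (complex \<Rightarrow> complex) \<Rightarrow> ennreal" where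
  "BpK_normp K p s f = ennreal (cmod (f 0) powr p) +
     (SUP a\<in>udisc. ennreal ((1 - (cmod a)\<^sup>2) powr s / K (1 - (cmod a)\<^sup>2)) *
        Bp_normp p s (\<lambda>z. f (disc_aut a z) - f a))"

definition in_BpK :: "(real \<Rightarrow> real) \<Rightarrow> real \<Rightarrow> real \<Rightarrow> (complex \<Rightarrow> complex) \<Rightarrow> bool" where
  "in_BpK K p s f \<longleftrightarrow> f holomorphic_on udisc \<and> BpK_normp K p s f < \<infinity>"

text \<open>The B_p^K(s) norm (real, meaningful for members of the space).\<close>
definition BpK_norm :: "(real \<Rightarrow> real) \<Rightarrow> real \<Rightarrow> real \<Rightarrow> (complex \<Rightarrow> complex) \<Rightarrow> real" where
  "BpK_norm K p s f = enn2real (BpK_normp K p s f) powr (1 / p)"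

end

theory Submission
  imports Defs "HOL-Complex_Analysis.Complex_Analysis"
begin

text \<open>
  For h holomorphic on a square, |h|^p at the centre is bounded by a multiple of the mean of |h|^p
  over the square (for p = 1 by Cauchy's formula on concentric square contours, for other p by
  elementary absorption arguments). Applied to the derivative, this bounds |g| near 0 by the B_p(s)
  seminorm of g whenever g(0) = 0. With g = f \<circ> \<phi>_a - f(a), the definition of the B_p^K(s) norm
  then bounds the oscillation of f on the disc of radius (1 - |a|)/4 about a by
  \<parallel>f\<parallel> (K(1 - |a|^2) / (1 - |a|^2)^s)^(1/p).
  For n \<ge> 1 the claim follows by Cauchy's estimates on that disc. For n = 0 one telescopes along
  the points (1 - (3/4)^k) z/|z|: condition (B) gives K(u) \<le> C (u/t)^\<sigma> K(t), so, as \<sigma> < s, the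
  weights K(\<rho>)/\<rho>^s along the chain are dominated by a geometric series times the weight at z,
  and |f(0)| \<le> \<parallel>f\<parallel>.
\<close>

lemma measurable_Complex [measurable (raw)]:
  assumes "f \<in> borel_measurable M" "g \<in> borel_measurable M"
  shows "(\<lambda>x. Complex (f x) (g x)) \<in> borel_measurable M"
  using assms by (subst borel_measurable_complex_iff) simp

lemma lborel_complex_eq_distr_Complex:
  "(lborel :: complex measure) = distr (lborel \<Otimes>\<^sub>M lborel) borel (\<lambda>p. Complex (fst p) (snd p))"
proof (rule lborel_eqI)
  fix l u :: complex
  assume le: "\<And>b. b \<in> Basis \<Longrightarrow> l \<bullet> b \<le> u \<bullet> b"
  have "Re l \<le> Re u" "Im l \<le> Im u"
    using le[of 1] le[of \<i>] by (auto simp: Basis_complex_def inner_complex_def)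
  have "(\<lambda>p. Complex (fst p) (snd p)) -` box l u \<inter> space (lborel \<Otimes>\<^sub>M lborel)
      = {Re l<..<Re u} \<times> {Im l<..<Im u}"
    by (auto simp: in_box_complex_iff space_pair_measure)
  then have "emeasure (distr (lborel \<Otimes>\<^sub>M lborel) borel (\<lambda>p. Complex (fst p) (snd p))) (box l u)
      = emeasure (lborel \<Otimes>\<^sub>M lborel) ({Re l<..<Re u} \<times> {Im l<..<Im u})"
    by (subst emeasure_distr) (auto simp del: space_borel)
  also have "\<dots> = (\<Prod>b\<in>Basis. (u - l) \<bullet> b)"
    using \<open>Re l \<le> Re u\<close> \<open>Im l \<le> Im u\<close>
    by (simp add: lborel.emeasure_pair_measure_Times ennreal_mult Basis_complex_def inner_complex_def)
  finally show "emeasure (distr (lborel \<Otimes>\<^sub>M lborel) borel (\<lambda>p. Complex (fst p) (snd p))) (box l u)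
      = (\<Prod>b\<in>Basis. (u - l) \<bullet> b)" .
qed simp

lemma nn_integral_lborel_complex:
  assumes [measurable]: "G \<in> borel_measurable borel"
  shows "(\<integral>\<^sup>+z. G z \<partial>lborel) = (\<integral>\<^sup>+x. (\<integral>\<^sup>+y. G (Complex x y) \<partial>lborel) \<partial>lborel)"
    and "(\<integral>\<^sup>+z. G z \<partial>lborel) = (\<integral>\<^sup>+y. (\<integral>\<^sup>+x. G (Complex x y) \<partial>lborel) \<partial>lborel)"
proof -
  have eq: "(\<integral>\<^sup>+z. G z \<partial>lborel) = (\<integral>\<^sup>+p. G (Complex (fst p) (snd p)) \<partial>(lborel \<Otimes>\<^sub>M lborel))"
    by (subst lborel_complex_eq_distr_Complex) (simp add: nn_integral_distr)
  then show "(\<integral>\<^sup>+z. G z \<partial>lborel) = (\<integral>\<^sup>+x. (\<integral>\<^sup>+y. G (Complex x y) \<partial>lborel) \<partial>lborel)"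
    using lborel.nn_integral_fst[of "\<lambda>p. G (Complex (fst p) (snd p))" lborel] by simp
  show "(\<integral>\<^sup>+z. G z \<partial>lborel) = (\<integral>\<^sup>+y. (\<integral>\<^sup>+x. G (Complex x y) \<partial>lborel) \<partial>lborel)"
    unfolding eq using lborel_pair.nn_integral_snd[of "\<lambda>p. G (Complex (fst p) (snd p))"] by simp
qed

lemma nn_integral_reflect_lborel:
  fixes f :: "real \<Rightarrow> ennreal"
  assumes [measurable]: "f \<in> borel_measurable borel"
  shows "(\<integral>\<^sup>+t. f (-t) \<partial>lborel) = (\<integral>\<^sup>+t. f t \<partial>lborel)"
  using nn_integral_real_affine[of f "-1" 0] by simp

lemma ennreal_integral_le_nn_integral:
  fixes \<phi> :: "real \<Rightarrow> real"
  assumes "continuous_on {a..b} \<phi>" "\<And>x. x \<in> {a..b} \<Longrightarrow> 0 \<le> \<phi> x"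
    and "\<And>x. x \<in> {a..b} \<Longrightarrow> ennreal (\<phi> x) \<le> \<Psi> x"
  shows "ennreal (integral {a..b} \<phi>) \<le> (\<integral>\<^sup>+x. \<Psi> x \<partial>lborel)"
proof -
  have "ennreal (integral {a..b} \<phi>) = (\<integral>\<^sup>+x. ennreal (\<phi> x) * indicator {a..b} x \<partial>lborel)"
    using nn_integral_has_integral_lebesgue'[OF assms(2) integrable_integral[OF integrable_continuous_interval[OF assms(1)]]]
    by simp
  also have "\<dots> \<le> (\<integral>\<^sup>+x. \<Psi> x \<partial>lborel)"
    using assms(3) by (intro nn_integral_mono) (auto simp: indicator_def)
  finally show ?thesis .
qed

lemma borel_measurable_indicator_mult_continuous:
  fixes g :: "complex \<Rightarrow> real"
  assumes "closed S" "continuous_on S g"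
  shows "(\<lambda>z. indicator S z * g z) \<in> borel_measurable borel"
  using borel_measurable_continuous_on_indicator[of S g] assms by simp

lemma ennreal_mult_mult: "0 \<le> a \<Longrightarrow> 0 \<le> b \<Longrightarrow> ennreal a * (ennreal b * c) = ennreal (a * b) * c"
  by (simp add: ennreal_mult mult.assoc)

lemma le_powr_mult_plus:
  fixes x l p :: real
  assumes "1 \<le> p" "0 < l" "0 \<le> x"
  shows "x \<le> l powr (1 - p) * x powr p + l"
proof (cases "x \<le> l")
  case False
  then have "x = x powr (1 - p) * x powr p"
    using assms by (simp add: powr_add[symmetric])
  also have "\<dots> \<le> l powr (1 - p) * x powr p"
    using False assms by (intro mult_right_mono powr_mono2') auto
  finally show ?thesis
    using assms by simp
qed (use assms in \<open>simp add: add_increasing\<close>)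

lemma le_powr_mult_of_le:
  fixes x B p :: real
  assumes "0 \<le> x" "x \<le> B" "p \<le> 1"
  shows "x \<le> B powr (1 - p) * x powr p"
proof (cases "x = 0")
  case False
  then have "x = x powr (1 - p) * x powr p"
    using assms by (simp add: powr_add[symmetric])
  also have "\<dots> \<le> B powr (1 - p) * x powr p"
    using assms by (intro mult_right_mono powr_mono2) auto
  finally show ?thesis .
qed simp

lemma le_powr_inverse_of_powr_le:
  fixes x y p :: real
  assumes "0 \<le> x" "0 < p" "x powr p \<le> y"
  shows "x \<le> y powr (1 / p)"
proof -
  have "x = (x powr p) powr (1 / p)"
    using assms by (simp add: powr_powr)
  also have "\<dots> \<le> y powr (1 / p)"
    using assms by (intro powr_mono2) auto
  finally show ?thesis .
qed

lemma min_powr_one_le_powr: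
  fixes a x e :: real
  assumes "0 < a" "a \<le> x" "x \<le> 1"
  shows "min (a powr e) 1 \<le> x powr e"
proof (cases "0 \<le> e")
  case True
  then show ?thesis
    using assms by (simp add: min.coboundedI1 powr_mono2)
next
  case False
  then have "1 powr e \<le> x powr e"
    using assms by (intro powr_mono2') auto
  then show ?thesis
    by simp
qed

lemma one_minus_square_le: "1 - x\<^sup>2 \<le> 2 * (1 - x)" for x :: real
  using zero_le_power2[of "1 - x"] by (simp add: power2_eq_square algebra_simps)

lemma exists_geometric_shell:
  fixes x :: real
  assumes "0 \<le> x" "x < 1"
  obtains m where "1 - (3 / 4) ^ m \<le> x" "x \<le> 1 - (3 / 4) ^ Suc m"
proof -
  obtain n where "(3 / 4 :: real) ^ n < 1 - x"
    using real_arch_pow_inv[of "1 - x" "3 / 4"] assms(2) by auto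
  moreover have "(3 / 4 :: real) ^ Suc n \<le> (3 / 4) ^ n"
    by (rule power_decreasing) auto
  ultimately have ex: "\<exists>k. x \<le> 1 - (3 / 4 :: real) ^ Suc k"
    by (intro exI[of _ n]) linarith
  define m where "m = (LEAST k. x \<le> 1 - (3 / 4 :: real) ^ Suc k)"
  have "x \<le> 1 - (3 / 4) ^ Suc m"
    unfolding m_def using ex by (rule LeastI_ex)
  moreover have "1 - (3 / 4) ^ m \<le> x"
  proof (cases m)
    case (Suc j)
    then have "j < m"
      by simp
    then have "\<not> x \<le> 1 - (3 / 4) ^ Suc j"
      unfolding m_def by (rule not_less_Least)
    then show ?thesis
      using Suc by simp
  qed (use assms(1) in simp)
  ultimately show ?thesis
    using that by blast
qed

lemma one_minus_square_shell_ratio: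
  fixes x :: real
  assumes "k \<le> m" "1 - (3 / 4) ^ m \<le> x"
  shows "(1 - x\<^sup>2) / (1 - (1 - (3 / 4) ^ k)\<^sup>2) \<le> 2 * (3 / 4) ^ (m - k)"
proof -
  define q where "q = (3 / 4 :: real) ^ k"
  have q: "0 < q" "q \<le> 1"
    by (auto simp: q_def power_le_one)
  have "1 - x\<^sup>2 \<le> 2 * (1 - x)"
    by (rule one_minus_square_le)
  also have "\<dots> \<le> 2 * (3 / 4) ^ m"
    using assms(2) by simp
  finally have "1 - x\<^sup>2 \<le> 2 * (3 / 4) ^ m" .
  moreover have "q \<le> 1 - (1 - q)\<^sup>2"
    using q by (simp add: power2_eq_square algebra_simps mult_left_le)
  ultimately have "(1 - x\<^sup>2) / (1 - (1 - q)\<^sup>2) \<le> 2 * (3 / 4) ^ m / q"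
    using q by (intro frac_le) auto
  also have "\<dots> = 2 * (3 / 4) ^ (m - k)"
    using assms(1) by (simp add: q_def power_diff)
  finally show ?thesis
    by (simp add: q_def)
qed

lemma sum_power_diff_less:
  fixes \<theta> :: real
  assumes "0 < \<theta>" "\<theta> < 1"
  shows "(\<Sum>k\<le>m. \<theta> ^ (m - k)) < 1 / (1 - \<theta>)"
proof -
  have "(\<Sum>k\<le>m. \<theta> ^ (m - k)) = (\<Sum>k\<le>m. \<theta> ^ (m - (m - k)))"
    using sum.atLeastAtMost_rev[of "\<lambda>k. \<theta> ^ (m - k)" 0 m] by (simp add: atLeast0AtMost)
  also have "\<dots> = (\<Sum>k\<le>m. \<theta> ^ k)"
    by (intro sum.cong) auto
  also have "\<dots> < 1 / (1 - \<theta>)"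
    using assms by (intro geometric_sum_less) auto
  finally show ?thesis .
qed

lemma norm_diff_le_sum_of_steps:
  fixes F :: "real \<Rightarrow> 'a::real_normed_vector"
  assumes T0: "T 0 = 0" and mono: "\<And>k. T k \<le> T (Suc k)"
    and step: "\<And>k t. T k \<le> t \<Longrightarrow> t \<le> T (Suc k) \<Longrightarrow> norm (F t - F (T k)) \<le> A k"
  shows "0 \<le> t \<Longrightarrow> t \<le> T (Suc m) \<Longrightarrow> norm (F t - F 0) \<le> (\<Sum>k\<le>m. A k)"
proof (induction m arbitrary: t)
  case 0
  then show ?case
    using step[of 0 t] T0 by simp
next
  case (Suc m)
  have A: "0 \<le> A (Suc m)"
    using step[of "Suc m" "T (Suc m)"] mono[of "Suc m"] by simp
  show ?case
  proof (cases "t \<le> T (Suc m)")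
    case True
    then show ?thesis
      using Suc.IH[OF Suc.prems(1)] A by simp
  next
    case False
    have "0 \<le> T (Suc m)"
      using lift_Suc_mono_le[of T, OF mono, of 0 "Suc m"] T0 by simp
    then have "norm (F (T (Suc m)) - F 0) \<le> (\<Sum>k\<le>m. A k)"
      by (rule Suc.IH) simp
    moreover have "norm (F t - F (T (Suc m))) \<le> A (Suc m)"
      using False Suc.prems(2) by (intro step) auto
    ultimately show ?thesis
      using norm_triangle_ineq[of "F t - F (T (Suc m))" "F (T (Suc m)) - F 0"] by simp
  qed
qed

section \<open>Sub-mean-value inequalities on squares\<close>

lemma contour_integral_linepath_same_Im:
  assumes "Im z = c" "Im z' = c" "Re z = a" "Re z' = b" "a < b"
  shows "contour_integral (linepath z z') f = integral {a..b} (\<lambda>x. f (Complex x c))"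
proof -
  have "\<i> * contour_integral (linepath z z') f = contour_integral (linepath (\<i> * z) (\<i> * z')) (\<lambda>w. f (- \<i> * w))"
    by (simp add: contour_integral_integral linepath_def algebra_simps integral_mult_right[symmetric])
  also have "\<dots> = \<i> * integral {a..b} (\<lambda>x. f (- \<i> * Complex (- c) x))"
    using assms by (intro contour_integral_linepath_same_Re) auto
  also have "(\<lambda>x. - \<i> * Complex (- c) x) = (\<lambda>x. Complex x c)"
    by (auto simp: complex_eq_iff)
  finally show ?thesis by simp
qed

lemma contour_integral_rectpath:
  fixes F :: "complex \<Rightarrow> complex"
  assumes "continuous_on (path_image (rectpath a1 a3)) F"
  defines "a2 \<equiv> Complex (Re a3) (Im a1)" and "a4 \<equiv> Complex (Re a1) (Im a3)"
  shows "contour_integral (rectpath a1 a3) F =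
           contour_integral (linepath a1 a2) F + contour_integral (linepath a2 a3) F
         + contour_integral (linepath a3 a4) F + contour_integral (linepath a4 a1) F"
proof -
  have img: "path_image (rectpath a1 a3) =
      closed_segment a1 a2 \<union> closed_segment a2 a3 \<union> closed_segment a3 a4 \<union> closed_segment a4 a1"
    by (simp add: rectpath_def Let_def path_image_join Un_assoc a2_def a4_def)
  have int: "F contour_integrable_on linepath a b"
    if "closed_segment a b \<subseteq> path_image (rectpath a1 a3)" for a b
    by (rule contour_integrable_continuous_linepath continuous_on_subset[OF assms(1) that])+
  have "F contour_integrable_on linepath a1 a2" "F contour_integrable_on linepath a2 a3"
    "F contour_integrable_on linepath a3 a4" "F contour_integrable_on linepath a4 a1"
    by (intro int; unfold img; blast)+
  then show ?thesis
    unfolding rectpath_def Let_def a2_def[symmetric] a4_def[symmetric]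
    by (simp add: contour_integrable_joinI add.assoc)
qed

definition csquare :: "complex \<Rightarrow> real \<Rightarrow> complex set" where
  "csquare v r = cbox (v - Complex r r) (v + Complex r r)"

lemma mem_csquare: "w \<in> csquare v r \<longleftrightarrow> \<bar>Re w - Re v\<bar> \<le> r \<and> \<bar>Im w - Im v\<bar> \<le> r"
  by (auto simp: csquare_def in_cbox_complex_iff)

lemma compact_csquare [simp]: "compact (csquare v r)"
  by (simp add: csquare_def)

lemma csquare_borel [measurable]: "csquare v r \<in> sets borel"
  by (simp add: csquare_def)

lemma emeasure_csquare: "0 \<le> r \<Longrightarrow> emeasure lborel (csquare v r) = ennreal (4 * r^2)"
  by (simp add: csquare_def emeasure_lborel_cbox_eq Basis_complex_def inner_complex_def power2_eq_square)

lemma csquare_side: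
  assumes "P \<in> {\<lambda>x. Complex x (-t), \<lambda>y. Complex t y, \<lambda>x. Complex x t, \<lambda>y. Complex (-t) y}"
  shows "continuous_on A P" and "x \<in> {-t..t} \<Longrightarrow> P x \<in> csquare 0 t"
    and "x \<in> {-t..t} \<Longrightarrow> t \<le> cmod (P x)"
proof -
  show "continuous_on A P"
    using assms unfolding Complex_eq by (auto; intro continuous_intros)
  assume "x \<in> {-t..t}"
  then show "P x \<in> csquare 0 t" "t \<le> cmod (P x)"
    using assms abs_Re_le_cmod[of "P x"] abs_Im_le_cmod[of "P x"] by (auto simp: mem_csquare)
qed

lemma borel_measurable_csquare_norm:
  fixes h :: "complex \<Rightarrow> complex"
  assumes "h holomorphic_on csquare v r"
  shows "(\<lambda>z. indicator (csquare v r) z * cmod (h z)) \<in> borel_measurable borel"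
  using holomorphic_on_imp_continuous_on[OF assms]
  by (intro borel_measurable_indicator_mult_continuous continuous_intros) (auto intro: compact_imp_closed)

lemma Cauchy_integral_formula_csquare:
  fixes h :: "complex \<Rightarrow> complex"
  assumes hol: "h holomorphic_on csquare 0 t" and t: "0 < t"
  shows "2 * pi * \<i> * h 0 =
      integral {-t..t} (\<lambda>x. h (Complex x (-t)) / Complex x (-t))
    + \<i> * integral {-t..t} (\<lambda>y. h (Complex t y) / Complex t y)
    - integral {-t..t} (\<lambda>x. h (Complex x t) / Complex x t)
    - \<i> * integral {-t..t} (\<lambda>y. h (Complex (-t) y) / Complex (-t) y)"
proof -
  define a1 a3 where "a1 = Complex (-t) (-t)" and "a3 = Complex t t"
  define F where "F = (\<lambda>w. h w / w)"
  have sq: "csquare 0 t = cbox a1 a3"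
    by (auto simp: mem_csquare in_cbox_complex_iff a1_def a3_def abs_le_iff)
  have box: "0 \<in> box a1 a3"
    using t by (simp add: a1_def a3_def in_box_complex_iff)
  have img: "path_image (rectpath a1 a3) \<subseteq> cbox a1 a3 - {0}"
    using t box by (subst path_image_rectpath_cbox_minus_box) (auto simp: a1_def a3_def)
  have Cauchy: "contour_integral (rectpath a1 a3) F = 2 * pi * \<i> * h 0"
    using Cauchy_integral_formula_convex_simple[of "cbox a1 a3" h 0 "rectpath a1 a3"]
      winding_number_rectpath[OF box] hol box img
    by (auto simp: sq F_def intro: contour_integral_unique)
  have cont: "continuous_on (path_image (rectpath a1 a3)) F"
    using holomorphic_on_imp_continuous_on[OF hol] img unfolding F_def sq
    by (intro continuous_intros) (auto elim: continuous_on_subset)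
  have rev: "contour_integral (linepath a3 (Complex (-t) t)) F = - contour_integral (linepath (Complex (-t) t) a3) F"
    "contour_integral (linepath (Complex (-t) t) a1) F = - contour_integral (linepath a1 (Complex (-t) t)) F"
    using cont by (auto intro!: contour_integral_reverse_linepath elim!: continuous_on_subset
        simp: rectpath_def Let_def path_image_join a1_def a3_def)
  have "2 * pi * \<i> * h 0 =
      contour_integral (linepath a1 (Complex t (-t))) F + contour_integral (linepath (Complex t (-t)) a3) F
    + contour_integral (linepath a3 (Complex (-t) t)) F + contour_integral (linepath (Complex (-t) t) a1) F"
    using Cauchy cont by (simp add: contour_integral_rectpath a1_def a3_def)
  also have "\<dots> = integral {-t..t} (\<lambda>x. F (Complex x (-t))) + \<i> * integral {-t..t} (\<lambda>y. F (Complex t y))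
    - integral {-t..t} (\<lambda>x. F (Complex x t)) - \<i> * integral {-t..t} (\<lambda>y. F (Complex (-t) y))"
    unfolding rev using t by (simp add: a1_def a3_def contour_integral_linepath_same_Im contour_integral_linepath_same_Re)
  finally show ?thesis by (simp add: F_def)
qed

lemma norm_integral_divide_le:
  fixes g P :: "real \<Rightarrow> complex"
  assumes "continuous_on {a..b} g" "continuous_on {a..b} P"
    and "\<And>x. x \<in> {a..b} \<Longrightarrow> t \<le> cmod (P x)" and "0 < t"
  shows "cmod (integral {a..b} (\<lambda>x. g x / P x)) \<le> integral {a..b} (\<lambda>x. cmod (g x)) / t"
proof -
  have "P x \<noteq> 0" if "x \<in> {a..b}" for x
    using assms(3)[OF that] assms(4) by auto
  then have "cmod (integral {a..b} (\<lambda>x. g x / P x)) \<le> integral {a..b} (\<lambda>x. cmod (g x) / t)"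
    using assms by (intro integral_norm_bound_integral integrable_continuous_interval continuous_intros)
      (auto simp: norm_divide intro!: divide_left_mono mult_pos_pos)
  then show ?thesis
    by simp
qed

lemma csquare_boundary_estimate:
  fixes h :: "complex \<Rightarrow> complex"
  assumes hol: "h holomorphic_on csquare 0 t" and t: "0 < t"
  shows "2 * pi * t * cmod (h 0) \<le>
      integral {-t..t} (\<lambda>x. cmod (h (Complex x (-t)))) + integral {-t..t} (\<lambda>y. cmod (h (Complex t y)))
    + integral {-t..t} (\<lambda>x. cmod (h (Complex x t))) + integral {-t..t} (\<lambda>y. cmod (h (Complex (-t) y)))"
proof -
  have side: "cmod (integral {-t..t} (\<lambda>x. h (P x) / P x)) \<le> integral {-t..t} (\<lambda>x. cmod (h (P x))) / t"
    if "P \<in> {\<lambda>x. Complex x (-t), \<lambda>y. Complex t y, \<lambda>x. Complex x t, \<lambda>y. Complex (-t) y}" for P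
  proof (rule norm_integral_divide_le)
    show "continuous_on {-t..t} (\<lambda>x. h (P x))"
      using csquare_side[OF that]
      by (auto intro: continuous_on_compose2[OF holomorphic_on_imp_continuous_on[OF hol]])
  qed (use csquare_side[OF that] t in auto)
  have triangle: "cmod (a + \<i> * b - c - \<i> * d) \<le> cmod a + cmod b + cmod c + cmod d" for a b c d
    using norm_triangle_ineq4[of "a + \<i> * b - c" "\<i> * d"] norm_triangle_ineq4[of "a + \<i> * b" c]
      norm_triangle_ineq[of a "\<i> * b"] by (simp add: norm_mult)
  have "2 * pi * t * cmod (h 0) = t * cmod (2 * pi * \<i> * h 0)"
    by (simp add: norm_mult)
  also have "\<dots> \<le> t * (cmod (integral {-t..t} (\<lambda>x. h (Complex x (-t)) / Complex x (-t)))
    + cmod (integral {-t..t} (\<lambda>y. h (Complex t y) / Complex t y))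
    + cmod (integral {-t..t} (\<lambda>x. h (Complex x t) / Complex x t))
    + cmod (integral {-t..t} (\<lambda>y. h (Complex (-t) y) / Complex (-t) y)))"
    unfolding Cauchy_integral_formula_csquare[OF hol t] using t
    by (intro mult_left_mono) (simp_all add: triangle)
  also have "\<dots> \<le> t * (integral {-t..t} (\<lambda>x. cmod (h (Complex x (-t)))) / t
    + integral {-t..t} (\<lambda>y. cmod (h (Complex t y))) / t
    + integral {-t..t} (\<lambda>x. cmod (h (Complex x t))) / t
    + integral {-t..t} (\<lambda>y. cmod (h (Complex (-t) y))) / t)"
    using t by (intro mult_left_mono add_mono side) auto
  also have "\<dots> =
      integral {-t..t} (\<lambda>x. cmod (h (Complex x (-t)))) + integral {-t..t} (\<lambda>y. cmod (h (Complex t y)))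
    + integral {-t..t} (\<lambda>x. cmod (h (Complex x t))) + integral {-t..t} (\<lambda>y. cmod (h (Complex (-t) y)))"
    using t by (simp add: field_simps)
  finally show ?thesis .
qed

text \<open>Integrate the boundary estimate over the squares of half-side t \<in> [0, \<delta>]: every horizontal
  and every vertical line through the square is then met twice.\<close>

lemma csquare_submean_L1_origin:
  fixes h :: "complex \<Rightarrow> complex"
  assumes hol: "h holomorphic_on csquare 0 \<delta>" and \<delta>: "0 < \<delta>"
  shows "ennreal (pi * \<delta>^2 * cmod (h 0)) \<le>
     4 * (\<integral>\<^sup>+z. ennreal (indicator (csquare 0 \<delta>) z * cmod (h z)) \<partial>lborel)"
proof -
  define G where "G = (\<lambda>z. ennreal (indicator (csquare 0 \<delta>) z * cmod (h z)))"
  have [measurable]: "G \<in> borel_measurable borel"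
    using borel_measurable_csquare_norm[OF hol] by (simp add: G_def)
  define H V where "H = (\<lambda>y. \<integral>\<^sup>+x. G (Complex x y) \<partial>lborel)" and "V = (\<lambda>x. \<integral>\<^sup>+y. G (Complex x y) \<partial>lborel)"
  have [measurable]: "H \<in> borel_measurable borel" "V \<in> borel_measurable borel"
    unfolding H_def V_def by measurable
  have side: "ennreal (integral {-t..t} (\<lambda>x. cmod (h (P x)))) \<le> (\<integral>\<^sup>+x. G (P x) \<partial>lborel)"
    if "0 < t" "t \<le> \<delta>" "P \<in> {\<lambda>x. Complex x (-t), \<lambda>y. Complex t y, \<lambda>x. Complex x t, \<lambda>y. Complex (-t) y}" for t P
  proof (rule ennreal_integral_le_nn_integral)
    have "csquare 0 t \<subseteq> csquare 0 \<delta>"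
      using that by (auto simp: mem_csquare)
    then have "P x \<in> csquare 0 \<delta>" if "x \<in> {-t..t}" for x
      using csquare_side(2)[OF \<open>P \<in> _\<close> that] by blast
    then show "continuous_on {-t..t} (\<lambda>x. cmod (h (P x)))"
      "\<And>x. x \<in> {-t..t} \<Longrightarrow> ennreal (cmod (h (P x))) \<le> G (P x)"
      using csquare_side(1)[OF that(3)]
      by (auto simp: G_def intro!: continuous_on_norm
          intro: continuous_on_compose2[OF holomorphic_on_imp_continuous_on[OF hol]])
  qed simp
  have ennreal_add_le: "ennreal (a + b) \<le> ennreal a + ennreal b" for a b :: real
    by (simp add: ennreal_plus_if ennreal_leI)
  have pointwise: "ennreal (2 * pi * t * cmod (h 0)) * indicator {0..\<delta>} t \<le> H (-t) + V t + H t + V (-t)" for t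
  proof (cases "0 < t \<and> t \<le> \<delta>")
    case True
    then have "h holomorphic_on csquare 0 t"
      by (auto intro: holomorphic_on_subset[OF hol] simp: mem_csquare)
    with True have "ennreal (2 * pi * t * cmod (h 0)) \<le> ennreal (
        integral {-t..t} (\<lambda>x. cmod (h (Complex x (-t)))) + integral {-t..t} (\<lambda>y. cmod (h (Complex t y)))
      + integral {-t..t} (\<lambda>x. cmod (h (Complex x t))) + integral {-t..t} (\<lambda>y. cmod (h (Complex (-t) y))))"
      by (intro ennreal_leI csquare_boundary_estimate) auto
    also have "\<dots> \<le>
        ennreal (integral {-t..t} (\<lambda>x. cmod (h (Complex x (-t))))) + ennreal (integral {-t..t} (\<lambda>y. cmod (h (Complex t y))))
      + ennreal (integral {-t..t} (\<lambda>x. cmod (h (Complex x t)))) + ennreal (integral {-t..t} (\<lambda>y. cmod (h (Complex (-t) y))))"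
      by (meson ennreal_add_le add_right_mono order_trans)
    also have "\<dots> \<le> H (-t) + V t + H t + V (-t)"
      unfolding H_def V_def using True by (intro add_mono side) auto
    finally show ?thesis
      using True by simp
  qed (cases "t = 0"; auto simp: indicator_def)
  have "ennreal (pi * \<delta>^2 * cmod (h 0)) = (\<integral>\<^sup>+t. ennreal (2 * pi * t * cmod (h 0)) * indicator {0..\<delta>} t \<partial>lborel)"
    using \<delta> by (subst nn_integral_FTC_Icc[where F = "\<lambda>t. pi * t^2 * cmod (h 0)"])
      (auto intro!: derivative_eq_intros simp: power2_eq_square)
  also have "\<dots> \<le> (\<integral>\<^sup>+t. H (-t) + V t + H t + V (-t) \<partial>lborel)"
    by (intro nn_integral_mono pointwise)
  also have "\<dots> = (\<integral>\<^sup>+t. H t \<partial>lborel) + (\<integral>\<^sup>+t. V t \<partial>lborel) + (\<integral>\<^sup>+t. H t \<partial>lborel) + (\<integral>\<^sup>+t. V t \<partial>lborel)"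
    by (simp add: nn_integral_add nn_integral_reflect_lborel)
  also have "\<dots> = 4 * (\<integral>\<^sup>+z. G z \<partial>lborel)"
    unfolding H_def V_def nn_integral_lborel_complex[symmetric, OF \<open>G \<in> borel_measurable borel\<close>]
    unfolding numeral_Bit0 numeral_One distrib_right by simp
  finally show ?thesis by (simp add: G_def)
qed

lemma csquare_submean_L1:
  fixes h :: "complex \<Rightarrow> complex"
  assumes hol: "h holomorphic_on csquare w \<delta>" and \<delta>: "0 < \<delta>"
  shows "ennreal (pi * \<delta>^2 * cmod (h w)) \<le> 4 * (\<integral>\<^sup>+z. ennreal (indicator (csquare w \<delta>) z * cmod (h z)) \<partial>lborel)"
proof -
  have shift: "z \<in> csquare 0 \<delta> \<longleftrightarrow> w + z \<in> csquare w \<delta>" for z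
    by (simp add: mem_csquare)
  have "(\<lambda>z. w + z) ` csquare 0 \<delta> \<subseteq> csquare w \<delta>"
    by (auto simp: shift)
  then have "(h \<circ> (\<lambda>z. w + z)) holomorphic_on csquare 0 \<delta>"
    by (intro holomorphic_on_compose holomorphic_intros holomorphic_on_subset[OF hol])
  then have "(\<lambda>z. h (w + z)) holomorphic_on csquare 0 \<delta>"
    by (simp add: o_def)
  from csquare_submean_L1_origin[OF this \<delta>]
  have "ennreal (pi * \<delta>^2 * cmod (h w)) \<le> 4 * (\<integral>\<^sup>+z. ennreal (indicator (csquare w \<delta>) (w + z) * cmod (h (w + z))) \<partial>lborel)"
    by (simp add: indicator_def shift)
  also have "(\<integral>\<^sup>+z. ennreal (indicator (csquare w \<delta>) (w + z) * cmod (h (w + z))) \<partial>lborel)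
      = (\<integral>\<^sup>+z. ennreal (indicator (csquare w \<delta>) z * cmod (h z)) \<partial>lborel)"
    using borel_measurable_csquare_norm[OF hol]
    by (subst lborel_distr_plus[symmetric, of w]) (simp add: nn_integral_distr)
  finally show ?thesis .
qed

lemma borel_measurable_csquare_norm_powr:
  fixes h :: "complex \<Rightarrow> complex"
  assumes "h holomorphic_on csquare v R" "0 < p"
  shows "(\<lambda>z. indicator (csquare v R) z * cmod (h z) powr p) \<in> borel_measurable borel"
  using holomorphic_on_imp_continuous_on[OF assms(1)] assms(2)
  by (intro borel_measurable_indicator_mult_continuous continuous_on_powr' continuous_intros)
    (auto intro: compact_imp_closed)

lemma csquare_integral_norm_le:
  fixes h :: "complex \<Rightarrow> complex"
  assumes p: "1 \<le> p" and l: "0 < l" and hol: "h holomorphic_on csquare v R" and R: "0 \<le> R"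
  shows "(\<integral>\<^sup>+z. ennreal (indicator (csquare v R) z * cmod (h z)) \<partial>lborel)
    \<le> ennreal (l powr (1 - p)) * (\<integral>\<^sup>+z. ennreal (indicator (csquare v R) z * cmod (h z) powr p) \<partial>lborel)
      + ennreal l * ennreal (4 * R^2)"
proof -
  define Q where "Q = csquare v R"
  have meas [measurable]: "(\<lambda>z. ennreal (indicator Q z * cmod (h z) powr p)) \<in> borel_measurable lborel"
    using borel_measurable_csquare_norm_powr[OF hol] p by (simp add: Q_def)
  have Q: "Q \<in> sets lborel" "emeasure lborel Q = ennreal (4 * R^2)"
    using R by (simp_all add: Q_def emeasure_csquare)
  have "ennreal (indicator Q z * cmod (h z))
      \<le> ennreal (l powr (1 - p)) * ennreal (indicator Q z * cmod (h z) powr p) + ennreal l * indicator Q z" for z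
  proof (cases "z \<in> Q")
    case True
    have "ennreal (cmod (h z)) \<le> ennreal (l powr (1 - p) * cmod (h z) powr p + l)"
      using p l by (intro ennreal_leI le_powr_mult_plus) auto
    then show ?thesis
      using True l by (simp add: ennreal_mult)
  qed simp
  then have "(\<integral>\<^sup>+z. ennreal (indicator Q z * cmod (h z)) \<partial>lborel)
      \<le> (\<integral>\<^sup>+z. ennreal (l powr (1 - p)) * ennreal (indicator Q z * cmod (h z) powr p) + ennreal l * indicator Q z \<partial>lborel)"
    by (intro nn_integral_mono)
  also have "\<dots> = ennreal (l powr (1 - p)) * (\<integral>\<^sup>+z. ennreal (indicator Q z * cmod (h z) powr p) \<partial>lborel)
      + ennreal l * ennreal (4 * R^2)"
    using Q by (subst nn_integral_add) (auto simp: nn_integral_cmult[OF meas] nn_integral_cmult_indicator)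
  finally show ?thesis
    by (simp add: Q_def)
qed

text \<open>The choice l = \<pi> |h v| / 32 in the previous lemma makes the second term absorbable.\<close>

lemma csquare_submean_powr_ge1:
  fixes h :: "complex \<Rightarrow> complex"
  assumes p: "1 \<le> p" and hol: "h holomorphic_on csquare v R" and R: "0 < R"
  shows "ennreal (cmod (h v) powr p * R^2) \<le> ennreal ((8 / pi) * (pi / 32) powr (1 - p)) *
           (\<integral>\<^sup>+z. ennreal (indicator (csquare v R) z * cmod (h z) powr p) \<partial>lborel)"
proof (cases "h v = 0")
  case False
  define X I where "X = cmod (h v)"
    and "I = (\<integral>\<^sup>+z. ennreal (indicator (csquare v R) z * cmod (h z) powr p) \<partial>lborel)"
  define l where "l = pi / 32 * X"
  have X: "0 < X" and l: "0 < l"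
    using False by (simp_all add: X_def l_def)
  have "ennreal (pi * R^2 * X) \<le> 4 * (\<integral>\<^sup>+z. ennreal (indicator (csquare v R) z * cmod (h z)) \<partial>lborel)"
    unfolding X_def by (rule csquare_submean_L1[OF hol R])
  also have "\<dots> \<le> 4 * (ennreal (l powr (1 - p)) * I + ennreal l * ennreal (4 * R^2))"
    unfolding I_def using R by (intro mult_left_mono csquare_integral_norm_le[OF p l hol]) auto
  also have "\<dots> = ennreal (4 * l powr (1 - p)) * I + ennreal (16 * l * R^2)"
    using l by (simp add: distrib_left ennreal_mult' mult.assoc mult.left_commute)
  also have "16 * l * R^2 = pi * R^2 * X / 2"
    by (simp add: l_def)
  finally have "ennreal (pi * R^2 * X / 2) + ennreal (pi * R^2 * X / 2)
      \<le> ennreal (4 * l powr (1 - p)) * I + ennreal (pi * R^2 * X / 2)"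
    using X R by (simp add: ennreal_plus[symmetric] mult_ac del: ennreal_plus)
  then have half: "ennreal (pi * R^2 * X / 2) \<le> ennreal (4 * l powr (1 - p)) * I"
    by (simp add: add.commute)
  have "ennreal (X powr p * R^2) = ennreal (2 * X powr (p - 1) / pi) * ennreal (pi * R^2 * X / 2)"
    using X by (simp add: ennreal_mult[symmetric] powr_diff)
  also have "\<dots> \<le> ennreal (2 * X powr (p - 1) / pi) * (ennreal (4 * l powr (1 - p)) * I)"
    by (intro mult_left_mono half) simp
  also have "\<dots> = ennreal (2 * X powr (p - 1) / pi * (4 * l powr (1 - p))) * I"
    by (rule ennreal_mult_mult) auto
  also have "2 * X powr (p - 1) / pi * (4 * l powr (1 - p)) = (8 / pi) * (pi / 32) powr (1 - p)"
  proof -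
    have "l powr (1 - p) = (pi / 32) powr (1 - p) * X powr (1 - p)"
      unfolding l_def using X by (subst powr_mult) auto
    moreover have "X powr (p - 1) * X powr (1 - p) = 1"
      using X by (simp add: powr_add[symmetric])
    ultimately show ?thesis
      by (simp add: field_simps)
  qed
  finally show ?thesis
    by (simp add: X_def I_def)
qed simp

text \<open>For p < 1: maximise d^(2/p) |h|, where d is the max-norm distance to the boundary of the square.\<close>

lemma csquare_weighted_maximum:
  fixes h :: "complex \<Rightarrow> complex"
  assumes p: "0 < p" and hol: "h holomorphic_on csquare v R" and R: "0 < R" and hv: "h v \<noteq> 0"
  obtains w \<delta> where "0 < \<delta>" "csquare w \<delta> \<subseteq> csquare v R"
    "\<And>z. z \<in> csquare w \<delta> \<Longrightarrow> cmod (h z) \<le> 2 powr (2 / p) * cmod (h w)"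
    "cmod (h v) powr p * R^2 \<le> 4 * \<delta>^2 * cmod (h w) powr p"
proof -
  define d where "d = (\<lambda>w. R - max \<bar>Re w - Re v\<bar> \<bar>Im w - Im v\<bar>)"
  define \<psi> where "\<psi> = (\<lambda>w. d w powr (2 / p) * cmod (h w))"
  have d_nonneg: "0 \<le> d w" if "w \<in> csquare v R" for w
    using that by (auto simp: d_def mem_csquare)
  have "continuous_on (csquare v R) \<psi>"
    unfolding \<psi>_def d_def using p d_nonneg holomorphic_on_imp_continuous_on[OF hol]
    by (intro continuous_intros continuous_on_powr') (auto simp: d_def)
  moreover have v: "v \<in> csquare v R"
    using R by (simp add: mem_csquare)
  ultimately obtain w where w: "w \<in> csquare v R" and max: "\<And>z. z \<in> csquare v R \<Longrightarrow> \<psi> z \<le> \<psi> w"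
    using continuous_attains_sup[OF compact_csquare] by blast
  have "0 < \<psi> v"
    using R hv by (simp add: \<psi>_def d_def)
  then have "0 < \<psi> w"
    using max[OF v] by linarith
  then have dw: "0 < d w"
    using d_nonneg[OF w] by (cases "d w = 0") (auto simp: \<psi>_def)
  define \<delta> where "\<delta> = d w / 2"
  have \<delta>: "0 < \<delta>"
    using dw by (simp add: \<delta>_def)
  have near: "\<delta> \<le> d z \<and> z \<in> csquare v R" if "z \<in> csquare w \<delta>" for z
  proof -
    have "\<bar>Re w - Re v\<bar> \<le> R - d w" "\<bar>Im w - Im v\<bar> \<le> R - d w"
      by (simp_all add: d_def)
    moreover have "\<bar>Re z - Re w\<bar> \<le> \<delta>" "\<bar>Im z - Im w\<bar> \<le> \<delta>"
      using that by (simp_all add: mem_csquare)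
    ultimately have "\<bar>Re z - Re v\<bar> \<le> R - \<delta>" "\<bar>Im z - Im v\<bar> \<le> R - \<delta>"
      unfolding \<delta>_def by arith+
    then show ?thesis
      using \<delta> by (simp add: d_def mem_csquare)
  qed
  show ?thesis
  proof
    show "csquare w \<delta> \<subseteq> csquare v R"
      using near by blast
    show "cmod (h z) \<le> 2 powr (2 / p) * cmod (h w)" if "z \<in> csquare w \<delta>" for z
    proof -
      have "\<delta> powr (2 / p) * cmod (h z) \<le> \<psi> z"
        unfolding \<psi>_def using near[OF that] \<delta> p by (intro mult_right_mono powr_mono2) auto
      also have "\<dots> \<le> \<psi> w"
        using max near[OF that] by blast
      also have "\<dots> = (\<delta> * 2) powr (2 / p) * cmod (h w)"
        by (simp add: \<psi>_def \<delta>_def)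
      also have "\<dots> = \<delta> powr (2 / p) * (2 powr (2 / p) * cmod (h w))"
        using \<delta> by (simp add: powr_mult)
      finally show ?thesis
        using \<delta> by simp
    qed
    have "cmod (h v) powr p * R^2 = \<psi> v powr p"
      using R p by (simp add: \<psi>_def d_def powr_mult powr_powr)
    also have "\<dots> \<le> \<psi> w powr p"
      using max[OF v] \<open>0 < \<psi> v\<close> p by (intro powr_mono2) auto
    also have "\<dots> = 4 * \<delta>^2 * cmod (h w) powr p"
      using \<delta> p by (simp add: \<psi>_def \<delta>_def powr_mult powr_powr power_divide)
    finally show "cmod (h v) powr p * R^2 \<le> 4 * \<delta>^2 * cmod (h w) powr p" .
  qed (rule \<delta>)
qed

lemma csquare_submean_powr_le1:
  fixes h :: "complex \<Rightarrow> complex"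
  assumes p: "0 < p" "p \<le> 1" and hol: "h holomorphic_on csquare v R" and R: "0 < R"
  shows "ennreal (cmod (h v) powr p * R^2) \<le> ennreal ((16 / pi) * (2 powr (2 / p)) powr (1 - p)) *
           (\<integral>\<^sup>+z. ennreal (indicator (csquare v R) z * cmod (h z) powr p) \<partial>lborel)"
proof (cases "h v = 0")
  case False
  obtain \<delta> w where \<delta>: "0 < \<delta>" and sub: "csquare w \<delta> \<subseteq> csquare v R"
    and bound: "\<And>z. z \<in> csquare w \<delta> \<Longrightarrow> cmod (h z) \<le> 2 powr (2 / p) * cmod (h w)"
    and centre: "cmod (h v) powr p * R^2 \<le> 4 * \<delta>^2 * cmod (h w) powr p"
    using csquare_weighted_maximum[OF p(1) hol R False] by metis
  define X B I where "X = cmod (h w)" and "B = 2 powr (2 / p) * X"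
    and "I = (\<integral>\<^sup>+z. ennreal (indicator (csquare v R) z * cmod (h z) powr p) \<partial>lborel)"
  have "0 < cmod (h v) powr p * R^2"
    using False R by simp
  then have "0 < 4 * \<delta>^2 * X powr p"
    using centre unfolding X_def by linarith
  then have X: "0 < X"
    by (auto simp: X_def zero_less_mult_iff)
  have meas: "(\<lambda>z. ennreal (indicator (csquare v R) z * cmod (h z) powr p)) \<in> borel_measurable lborel"
    using borel_measurable_csquare_norm_powr[OF hol p(1)] by simp
  have pointwise: "ennreal (indicator (csquare w \<delta>) z * cmod (h z))
      \<le> ennreal (B powr (1 - p)) * ennreal (indicator (csquare v R) z * cmod (h z) powr p)" for z
  proof (cases "z \<in> csquare w \<delta>")
    case True
    then have "cmod (h z) \<le> B powr (1 - p) * cmod (h z) powr p"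
      using bound p by (intro le_powr_mult_of_le) (auto simp: B_def X_def)
    then show ?thesis
      using True sub by (auto simp: ennreal_mult[symmetric] intro: ennreal_leI)
  qed simp
  have "ennreal (pi * \<delta>^2 * X) \<le> 4 * (\<integral>\<^sup>+z. ennreal (indicator (csquare w \<delta>) z * cmod (h z)) \<partial>lborel)"
    unfolding X_def using holomorphic_on_subset[OF hol sub] \<delta> by (rule csquare_submean_L1)
  also have "\<dots> \<le> 4 * (\<integral>\<^sup>+z. ennreal (B powr (1 - p)) * ennreal (indicator (csquare v R) z * cmod (h z) powr p) \<partial>lborel)"
    by (intro mult_left_mono nn_integral_mono pointwise) simp
  also have "\<dots> = 4 * (ennreal (B powr (1 - p)) * I)"
    unfolding I_def by (subst nn_integral_cmult[OF meas]) simp_all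
  also have "\<dots> = ennreal (4 * B powr (1 - p)) * I"
    by (simp add: ennreal_mult mult.assoc)
  finally have L1: "ennreal (pi * \<delta>^2 * X) \<le> ennreal (4 * B powr (1 - p)) * I" .
  have "ennreal (cmod (h v) powr p * R^2) \<le> ennreal (4 * \<delta>^2 * X powr p)"
    using centre by (simp add: X_def ennreal_leI)
  also have "\<dots> = ennreal (4 * X powr (p - 1) / pi) * ennreal (pi * \<delta>^2 * X)"
    using X by (simp add: ennreal_mult[symmetric] powr_diff)
  also have "\<dots> \<le> ennreal (4 * X powr (p - 1) / pi) * (ennreal (4 * B powr (1 - p)) * I)"
    by (intro mult_left_mono L1) simp
  also have "\<dots> = ennreal (4 * X powr (p - 1) / pi * (4 * B powr (1 - p))) * I"
    by (rule ennreal_mult_mult) auto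
  also have "4 * X powr (p - 1) / pi * (4 * B powr (1 - p)) = (16 / pi) * (2 powr (2 / p)) powr (1 - p)"
  proof -
    have "B powr (1 - p) = (2 powr (2 / p)) powr (1 - p) * X powr (1 - p)"
      unfolding B_def using X by (subst powr_mult) auto
    moreover have "X powr (p - 1) * X powr (1 - p) = 1"
      using X by (simp add: powr_add[symmetric])
    ultimately show ?thesis
      by (simp add: field_simps)
  qed
  finally show ?thesis
    by (simp add: I_def)
qed simp

lemma csquare_submean_powr:
  assumes "0 < p"
  obtains A where "0 < A" "\<And>h v R. 0 < R \<Longrightarrow> h holomorphic_on csquare v R \<Longrightarrow>
     ennreal (cmod (h v) powr p * R^2) \<le> ennreal A * (\<integral>\<^sup>+z. ennreal (indicator (csquare v R) z * cmod (h z) powr p) \<partial>lborel)"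
proof (cases "p \<le> 1")
  case True
  then show ?thesis
    using that[of "(16 / pi) * (2 powr (2 / p)) powr (1 - p)"] assms csquare_submean_powr_le1 by auto
next
  case False
  then show ?thesis
    using that[of "(8 / pi) * (pi / 32) powr (1 - p)"] csquare_submean_powr_ge1 by auto
qed

section \<open>Disc automorphisms\<close>

lemma disc_aut_eq_Moebius_function: "disc_aut a z = - Moebius_function 0 a z"
  and disc_aut_eq_Moebius_function_uminus: "disc_aut a z = Moebius_function 0 (- a) (- z)"
  by (simp_all add: disc_aut_def Moebius_function_def minus_divide_left)

lemma disc_aut_in_udisc: "a \<in> udisc \<Longrightarrow> z \<in> udisc \<Longrightarrow> disc_aut a z \<in> udisc"
  using Moebius_function_norm_lt_1[of a z 0] by (simp add: udisc_def disc_aut_eq_Moebius_function)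

lemma holomorphic_on_disc_aut: "a \<in> udisc \<Longrightarrow> disc_aut a holomorphic_on udisc"
  using Moebius_function_holomorphic[of a 0] unfolding udisc_def disc_aut_eq_Moebius_function
  by (auto intro: holomorphic_intros)

lemma disc_aut_0 [simp]: "disc_aut a 0 = a"
  by (simp add: disc_aut_def)

lemma disc_aut_disc_aut:
  assumes "a \<in> udisc" "z \<in> udisc"
  shows "disc_aut a (disc_aut a z) = z"
proof -
  have "disc_aut a (disc_aut a z) = Moebius_function 0 (- a) (- disc_aut a z)"
    by (rule disc_aut_eq_Moebius_function_uminus)
  also have "- disc_aut a z = Moebius_function 0 a z"
    by (simp add: disc_aut_eq_Moebius_function)
  finally show ?thesis
    using Moebius_function_compose[of "- a" a z] assms by (simp add: udisc_def)
qed

lemma near_centre_in_udisc: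
  assumes "a \<in> udisc" "cmod (w - a) \<le> (1 - cmod a) / 4"
  shows "w \<in> udisc"
  using assms norm_triangle_sub[of w a] by (simp add: udisc_def)

lemma norm_disc_aut_near_centre:
  assumes a: "a \<in> udisc" and w: "cmod (w - a) \<le> (1 - cmod a) / 4"
  shows "cmod (disc_aut a w) \<le> 1 / 3"
proof -
  have a1: "cmod a < 1"
    using a by (simp add: udisc_def)
  have "cmod (cnj a * w) \<le> cmod w"
    using a1 by (simp add: norm_mult mult_left_le_one_le)
  moreover have "cmod w \<le> cmod a + cmod (w - a)"
    using norm_triangle_sub[of w a] by simp
  moreover have "1 - cmod (cnj a * w) \<le> cmod (1 - cnj a * w)"
    by (metis norm_one norm_triangle_ineq2)
  ultimately have denominator: "3 * ((1 - cmod a) / 4) \<le> cmod (1 - cnj a * w)"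
    using w by argo
  have "cmod (disc_aut a w) = cmod (w - a) / cmod (1 - cnj a * w)"
    by (simp add: disc_aut_def norm_divide norm_minus_commute)
  also have "\<dots> \<le> ((1 - cmod a) / 4) / (3 * ((1 - cmod a) / 4))"
    using w denominator a1 by (intro frac_le) auto
  also have "\<dots> = 1 / 3"
    using a1 by simp
  finally show ?thesis .
qed

section \<open>Bounds by the B_p(s) seminorm near the origin\<close>

lemma csquare_quarter_subset_ball:
  assumes "cmod v \<le> 1 / 3" "w \<in> csquare v (1 / 4)"
  shows "cmod w \<le> 5 / 6"
proof -
  have "cmod (w - v) \<le> 1 / 2"
    using cmod_le[of "w - v"] assms(2) by (simp add: mem_csquare)
  then show ?thesis
    using assms(1) norm_triangle_sub[of w v] by simp
qed

lemma csquare_integral_le_Bp_normp: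
  assumes p: "0 < p" and hol: "g holomorphic_on udisc" and v: "cmod v \<le> 1 / 3"
  shows "ennreal (min ((11 / 36) powr (p - 2 + s)) 1 / pi) *
           (\<integral>\<^sup>+z. ennreal (indicator (csquare v (1 / 4)) z * cmod (deriv g z) powr p) \<partial>lborel)
         \<le> Bp_normp p s g"
proof -
  define c Q where "c = min ((11 / 36) powr (p - 2 + s)) 1 / pi" and "Q = csquare v (1 / 4)"
  have sub: "Q \<subseteq> udisc"
    using csquare_quarter_subset_ball[OF v] by (force simp: Q_def udisc_def)
  have "deriv g holomorphic_on Q"
    using holomorphic_on_subset[OF holomorphic_deriv[of g udisc] sub] hol by (simp add: udisc_def)
  then have "ennreal c * (\<integral>\<^sup>+z. ennreal (indicator Q z * cmod (deriv g z) powr p) \<partial>lborel)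
      = (\<integral>\<^sup>+z. ennreal c * ennreal (indicator Q z * cmod (deriv g z) powr p) \<partial>lborel)"
    using borel_measurable_csquare_norm_powr[of "deriv g" v "1 / 4" p] p by (simp add: nn_integral_cmult Q_def)
  also have "\<dots> \<le> (\<integral>\<^sup>+z. indicator udisc z *
      ennreal (cmod (deriv g z) powr p * (1 - (cmod z)\<^sup>2) powr (p - 2 + s) / pi) \<partial>lborel)"
  proof (intro nn_integral_mono)
    fix z
    show "ennreal c * ennreal (indicator Q z * cmod (deriv g z) powr p) \<le> indicator udisc z *
        ennreal (cmod (deriv g z) powr p * (1 - (cmod z)\<^sup>2) powr (p - 2 + s) / pi)"
    proof (cases "z \<in> Q")
      case True
      then have "(cmod z)\<^sup>2 \<le> (5 / 6)\<^sup>2"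
        using csquare_quarter_subset_ball[OF v] by (intro power_mono) (auto simp: Q_def)
      then have "c \<le> (1 - (cmod z)\<^sup>2) powr (p - 2 + s) / pi"
        unfolding c_def by (intro divide_right_mono min_powr_one_le_powr) (auto simp: power2_eq_square)
      then have "c * cmod (deriv g z) powr p \<le> (1 - (cmod z)\<^sup>2) powr (p - 2 + s) / pi * cmod (deriv g z) powr p"
        by (rule mult_right_mono) simp
      then show ?thesis
        using True sub by (auto simp: c_def ennreal_mult[symmetric] mult.commute intro!: ennreal_leI)
    qed simp
  qed
  also have "\<dots> \<le> Bp_normp p s g"
    unfolding Bp_normp_def by simp
  finally show ?thesis
    by (simp add: c_def Q_def)
qed

lemma deriv_powr_le_Bp_normp:
  assumes p: "0 < p"
  obtains C where "0 < C" "\<And>g v. g holomorphic_on udisc \<Longrightarrow> cmod v \<le> 1 / 3 \<Longrightarrow>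
     ennreal (cmod (deriv g v) powr p) \<le> ennreal C * Bp_normp p s g"
proof -
  obtain A where A: "0 < A" and submean: "\<And>h v R. 0 < R \<Longrightarrow> h holomorphic_on csquare v R \<Longrightarrow>
     ennreal (cmod (h v) powr p * R^2) \<le> ennreal A * (\<integral>\<^sup>+z. ennreal (indicator (csquare v R) z * cmod (h z) powr p) \<partial>lborel)"
    using csquare_submean_powr[OF p] by blast
  define c where "c = min ((11 / 36) powr (p - 2 + s)) 1 / pi"
  have c: "0 < c"
    by (simp add: c_def)
  show ?thesis
  proof (rule that[of "16 * A / c"])
    show "0 < 16 * A / c"
      using A c by simp
    fix g v
    assume hol: "g holomorphic_on udisc" and v: "cmod v \<le> 1 / 3"
    define I where "I = (\<integral>\<^sup>+z. ennreal (indicator (csquare v (1 / 4)) z * cmod (deriv g z) powr p) \<partial>lborel)"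
    have "csquare v (1 / 4) \<subseteq> udisc"
      using csquare_quarter_subset_ball[OF v] by (force simp: udisc_def)
    then have hol': "deriv g holomorphic_on csquare v (1 / 4)"
      using holomorphic_on_subset[OF holomorphic_deriv[of g udisc]] hol by (simp add: udisc_def)
    have "ennreal (cmod (deriv g v) powr p) = 16 * ennreal (cmod (deriv g v) powr p * (1 / 4)^2)"
      by (subst ennreal_numeral[symmetric], subst ennreal_mult[symmetric]) (auto simp: power2_eq_square)
    also have "\<dots> \<le> 16 * (ennreal A * I)"
      unfolding I_def by (intro mult_left_mono submean hol') auto
    also have "\<dots> = ennreal (16 * A / c) * (ennreal c * I)"
    proof -
      have "ennreal (16 * A / c) * ennreal c = 16 * ennreal A"
        using A c by (simp add: ennreal_mult[symmetric] ennreal_mult')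
      then show ?thesis
        by (simp add: mult.assoc[symmetric])
    qed
    also have "\<dots> \<le> ennreal (16 * A / c) * Bp_normp p s g"
      unfolding I_def c_def by (intro mult_left_mono csquare_integral_le_Bp_normp[OF p hol v]) simp
    finally show "ennreal (cmod (deriv g v) powr p) \<le> ennreal (16 * A / c) * Bp_normp p s g" .
  qed
qed

lemma norm_powr_le_Bp_normp:
  assumes p: "0 < p"
  obtains C where "0 < C" "\<And>g u. g holomorphic_on udisc \<Longrightarrow> g 0 = 0 \<Longrightarrow> cmod u \<le> 1 / 3 \<Longrightarrow>
     ennreal (cmod (g u) powr p) \<le> ennreal C * Bp_normp p s g"
proof -
  obtain C where C: "0 < C" and deriv_bound: "\<And>g v. g holomorphic_on udisc \<Longrightarrow> cmod v \<le> 1 / 3 \<Longrightarrow>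
     ennreal (cmod (deriv g v) powr p) \<le> ennreal C * Bp_normp p s g"
    using deriv_powr_le_Bp_normp[OF p] by blast
  show ?thesis
  proof (rule that[OF C])
    fix g u
    assume hol: "g holomorphic_on udisc" and g0: "g 0 = 0" and u: "cmod u \<le> 1 / 3"
    show "ennreal (cmod (g u) powr p) \<le> ennreal C * Bp_normp p s g"
    proof (cases "Bp_normp p s g")
      case (real b)
      define B where "B = (C * b) powr (1 / p)"
      have disc: "cball 0 (1 / 3) \<subseteq> udisc"
        by (auto simp: udisc_def)
      have "cmod (deriv g v) \<le> B" if "v \<in> cball 0 (1 / 3)" for v
      proof -
        have "ennreal (cmod (deriv g v) powr p) \<le> ennreal (C * b)"
          using deriv_bound[OF hol, of v] that real C by (simp add: ennreal_mult)
        then show ?thesis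
          unfolding B_def using C real p by (intro le_powr_inverse_of_powr_le) auto
      qed
      then have "cmod (g u - g 0) \<le> B * cmod (u - 0)"
        using u disc
        by (intro field_differentiable_bound[of "cball 0 (1 / 3)" g "deriv g"] holomorphic_derivI[OF hol])
          (auto simp: udisc_def)
      also have "\<dots> \<le> B"
        using u by (intro mult_left_le) (auto simp: B_def)
      finally have "cmod (g u) powr p \<le> B powr p"
        using g0 p by (intro powr_mono2) auto
      also have "\<dots> = C * b"
        using p C real by (simp add: B_def powr_powr)
      finally show ?thesis
        using real C by (simp add: ennreal_mult[symmetric] ennreal_leI)
    qed (use C in \<open>simp add: ennreal_mult_top\<close>)
  qed
qed

section \<open>The weight K\<close>

lemma standing_K_pos: "standing_K K \<Longrightarrow> 0 < t \<Longrightarrow> 0 < K t"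
  by (simp add: standing_K_def)

lemma standing_K_mono: "standing_K K \<Longrightarrow> 0 \<le> x \<Longrightarrow> x \<le> y \<Longrightarrow> K x \<le> K y"
  by (auto simp: standing_K_def intro: mono_onD)

lemma K_ratio_le_phiK: "0 < t \<Longrightarrow> t \<le> 1 \<Longrightarrow> ennreal (K (t * x) / K t) \<le> phiK K x"
  unfolding phiK_def by (rule SUP_upper) auto

lemma phiK_mono:
  assumes K: "standing_K K" and "0 \<le> x" "x \<le> y"
  shows "phiK K x \<le> phiK K y"
  unfolding phiK_def
proof (rule SUP_mono)
  fix t :: real
  assume t: "t \<in> {0<..1}"
  have "K (t * x) / K t \<le> K (t * y) / K t"
    using assms t standing_K_pos[OF K, of t]
    by (intro divide_right_mono standing_K_mono[OF K] mult_left_mono) auto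
  then show "\<exists>t'\<in>{0<..1}. ennreal (K (t * x) / K t) \<le> ennreal (K (t' * y) / K t')"
    using t by (intro bexI[of _ t] ennreal_leI) auto
qed

lemma phiK_le_powr:
  assumes K: "standing_K K" and B: "condB K \<sigma>" and \<sigma>: "0 \<le> \<sigma>"
  obtains C where "0 < C" "\<And>x. 1 \<le> x \<Longrightarrow> phiK K x \<le> ennreal (C * x powr \<sigma>)"
proof -
  define J where "J = (\<integral>\<^sup>+ y. indicator {1<..} y * phiK K y / ennreal (y powr (1 + \<sigma>)) \<partial>lborel)"
  have "J < \<infinity>"
    using B by (simp add: condB_def J_def)
  then obtain I where I: "J = ennreal I" and "0 \<le> I"
    by (cases J) auto
  show ?thesis
  proof (rule that[of "(I + 1) * 2 powr (1 + \<sigma>)"])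
    show "0 < (I + 1) * 2 powr (1 + \<sigma>)"
      using \<open>0 \<le> I\<close> by simp
    fix x :: real
    assume x: "1 \<le> x"
    define X where "X = (2 * x) powr (1 + \<sigma>)"
    have X: "0 < X"
      using x by (simp add: X_def)
    have "phiK K x * ennreal (1 / X) * ennreal x
        = (\<integral>\<^sup>+ y. phiK K x * ennreal (1 / X) * indicator {x<..2 * x} y \<partial>lborel)"
      using x by (simp add: nn_integral_cmult_indicator)
    also have "\<dots> \<le> J"
      unfolding J_def
    proof (intro nn_integral_mono)
      fix y
      show "phiK K x * ennreal (1 / X) * indicator {x<..2 * x} y
          \<le> indicator {1<..} y * phiK K y / ennreal (y powr (1 + \<sigma>))"
      proof (cases "y \<in> {x<..2 * x}")
        case True
        have "phiK K x * ennreal (1 / X) \<le> phiK K y * ennreal (1 / y powr (1 + \<sigma>))"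
          using True x \<sigma> unfolding X_def
          by (intro mult_mono phiK_mono[OF K] ennreal_leI divide_left_mono powr_mono2) auto
        then show ?thesis
          using True x by (simp add: divide_ennreal_def inverse_ennreal divide_inverse)
      qed simp
    qed
    finally have mass: "phiK K x * ennreal (1 / X) * ennreal x \<le> ennreal I"
      by (simp add: I)
    have "phiK K x = phiK K x * ennreal (1 / X) * ennreal x * ennreal (X / x)"
      using X x by (simp add: mult.assoc ennreal_mult[symmetric])
    also have "\<dots> \<le> ennreal I * ennreal (2 powr (1 + \<sigma>) * x powr \<sigma>)"
      using mass x by (intro mult_mono) (auto simp: X_def powr_mult powr_add)
    also have "\<dots> \<le> ennreal ((I + 1) * 2 powr (1 + \<sigma>) * x powr \<sigma>)"
      using \<open>0 \<le> I\<close> by (auto simp: ennreal_mult[symmetric] mult.assoc intro!: ennreal_leI mult_right_mono)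
    finally show "phiK K x \<le> ennreal ((I + 1) * 2 powr (1 + \<sigma>) * x powr \<sigma>)" .
  qed
qed

lemma K_le_powr_ratio:
  assumes K: "standing_K K" and B: "condB K \<sigma>" and \<sigma>: "0 \<le> \<sigma>"
  obtains C where "0 < C" "\<And>t u. 0 < t \<Longrightarrow> t \<le> u \<Longrightarrow> u \<le> 1 \<Longrightarrow> K u \<le> C * (u / t) powr \<sigma> * K t"
proof -
  obtain C where C: "0 < C" and phi: "\<And>x. 1 \<le> x \<Longrightarrow> phiK K x \<le> ennreal (C * x powr \<sigma>)"
    using phiK_le_powr[OF K B \<sigma>] by metis
  show ?thesis
  proof (rule that[OF C])
    fix t u :: real
    assume tu: "0 < t" "t \<le> u" "u \<le> 1"
    have "ennreal (K (t * (u / t)) / K t) \<le> phiK K (u / t)"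
      using tu by (intro K_ratio_le_phiK) auto
    also have "\<dots> \<le> ennreal (C * (u / t) powr \<sigma>)"
      using tu by (intro phi) auto
    finally have "K u / K t \<le> C * (u / t) powr \<sigma>"
      using tu C by simp
    then show "K u \<le> C * (u / t) powr \<sigma> * K t"
      using standing_K_pos[OF K tu(1)] by (simp add: divide_le_eq)
  qed
qed

lemma K_weight_ratio_le:
  fixes K :: "real \<Rightarrow> real"
  assumes growth: "\<And>t u. 0 < t \<Longrightarrow> t \<le> u \<Longrightarrow> u \<le> 1 \<Longrightarrow> K u \<le> C * (u / t) powr \<sigma> * K t"
    and r: "0 < r" "r \<le> r'" "r' \<le> 1"
  shows "K r' / r' powr s \<le> C * (r / r') powr (s - \<sigma>) * (K r / r powr s)"
proof -
  have r': "0 < r'"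
    using r by linarith
  have "K r' / r' powr s \<le> C * (r' / r) powr \<sigma> * K r / r' powr s"
    using growth[OF r] r' by (intro divide_right_mono) auto
  also have "\<dots> = C * (r / r') powr (s - \<sigma>) * (K r / r powr s)"
    using r r' by (simp add: powr_diff powr_divide field_simps)
  finally show ?thesis .
qed

section \<open>Pointwise bounds in B_p^K(s)\<close>

lemma udisc_weight_pos: "a \<in> udisc \<Longrightarrow> 0 < 1 - (cmod a)\<^sup>2"
  by (simp add: udisc_def abs_square_less_1)

lemma Bp_normp_disc_aut_le_BpK_normp:
  assumes "a \<in> udisc"
  shows "ennreal ((1 - (cmod a)\<^sup>2) powr s / K (1 - (cmod a)\<^sup>2)) * Bp_normp p s (\<lambda>z. f (disc_aut a z) - f a)
           \<le> BpK_normp K p s f"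
  unfolding BpK_normp_def using assms by (intro add_increasing SUP_upper) auto

lemma norm_0_le_BpK_norm:
  assumes "0 < p" "BpK_normp K p s f < \<infinity>"
  shows "cmod (f 0) \<le> BpK_norm K p s f"
proof -
  have "ennreal (cmod (f 0) powr p) \<le> BpK_normp K p s f"
    unfolding BpK_normp_def by (rule add_increasing2) auto
  then have "cmod (f 0) powr p \<le> enn2real (BpK_normp K p s f)"
    using assms(2) by (cases "BpK_normp K p s f") auto
  then show ?thesis
    unfolding BpK_norm_def using assms(1) by (intro le_powr_inverse_of_powr_le) auto
qed

lemma BpK_oscillation:
  assumes p: "0 < p" and K: "\<And>t. 0 < t \<Longrightarrow> 0 < K t"
  obtains C where "0 < C" "\<And>f a w. in_BpK K p s f \<Longrightarrow> a \<in> udisc \<Longrightarrow> cmod (w - a) \<le> (1 - cmod a) / 4 \<Longrightarrow>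
     cmod (f w - f a) \<le> C * BpK_norm K p s f * (K (1 - (cmod a)\<^sup>2) / (1 - (cmod a)\<^sup>2) powr s) powr (1 / p)"
proof -
  obtain C where C: "0 < C" and bound: "\<And>g u. g holomorphic_on udisc \<Longrightarrow> g 0 = 0 \<Longrightarrow> cmod u \<le> 1 / 3 \<Longrightarrow>
     ennreal (cmod (g u) powr p) \<le> ennreal C * Bp_normp p s g"
    using norm_powr_le_Bp_normp[OF p, where s = s] by blast
  show ?thesis
  proof (rule that[of "C powr (1 / p)"])
    show "0 < C powr (1 / p)"
      using C by simp
    fix f a w
    assume f: "in_BpK K p s f" and a: "a \<in> udisc" and w: "cmod (w - a) \<le> (1 - cmod a) / 4"
    define \<rho> W N where "\<rho> = 1 - (cmod a)\<^sup>2" and "W = K \<rho> / \<rho> powr s"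
      and "N = enn2real (BpK_normp K p s f)"
    define g where "g = (\<lambda>z. f (disc_aut a z) - f a)"
    have \<rho>: "0 < \<rho>" and W: "0 < W"
      using udisc_weight_pos[OF a] K by (auto simp: \<rho>_def W_def)
    have N: "BpK_normp K p s f = ennreal N" "0 \<le> N"
      using f by (auto simp: in_BpK_def N_def)
    have "(f \<circ> disc_aut a) holomorphic_on udisc"
      using f disc_aut_in_udisc[OF a] unfolding in_BpK_def
      by (intro holomorphic_on_compose_gen[OF holomorphic_on_disc_aut[OF a]]) auto
    then have "g holomorphic_on udisc"
      unfolding g_def o_def by (intro holomorphic_intros)
    moreover have "g 0 = 0"
      by (simp add: g_def)
    moreover have "cmod (disc_aut a w) \<le> 1 / 3"
      using norm_disc_aut_near_centre[OF a w] .
    ultimately have "ennreal (cmod (g (disc_aut a w)) powr p) \<le> ennreal C * Bp_normp p s g"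
      by (rule bound)
    also have "Bp_normp p s g = ennreal W * (ennreal (1 / W) * Bp_normp p s g)"
      using W by (simp add: mult.assoc[symmetric] ennreal_mult[symmetric])
    also have "ennreal (1 / W) * Bp_normp p s g \<le> ennreal N"
      using Bp_normp_disc_aut_le_BpK_normp[OF a, of s K p f] N by (simp add: g_def W_def \<rho>_def)
    finally have "cmod (g (disc_aut a w)) powr p \<le> C * W * N"
      using C W N by (simp add: ennreal_mult[symmetric] mult.assoc mult_left_mono)
    moreover have "g (disc_aut a w) = f w - f a"
      using disc_aut_disc_aut[OF a near_centre_in_udisc[OF a w]] by (simp add: g_def)
    ultimately have "cmod (f w - f a) \<le> (C * W * N) powr (1 / p)"
      using p by (intro le_powr_inverse_of_powr_le) auto
    also have "\<dots> = C powr (1 / p) * BpK_norm K p s f * W powr (1 / p)"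
      using C W N by (simp add: powr_mult BpK_norm_def N_def mult_ac)
    finally show "cmod (f w - f a) \<le> C powr (1 / p) * BpK_norm K p s f * (K (1 - (cmod a)\<^sup>2) / (1 - (cmod a)\<^sup>2) powr s) powr (1 / p)"
      by (simp add: W_def \<rho>_def)
  qed
qed

lemma BpK_higher_deriv_bound:
  assumes p: "0 < p" and K: "\<And>t. 0 < t \<Longrightarrow> 0 < K t" and n: "0 < n"
  obtains C where "0 < C" "\<And>f a. in_BpK K p s f \<Longrightarrow> a \<in> udisc \<Longrightarrow>
     cmod ((deriv ^^ n) f a) \<le> C * BpK_norm K p s f *
       (K (1 - (cmod a)\<^sup>2) / (1 - (cmod a)\<^sup>2) powr (p * real n + s)) powr (1 / p)"
proof -
  obtain C where C: "0 < C" and osc: "\<And>f a w. in_BpK K p s f \<Longrightarrow> a \<in> udisc \<Longrightarrow> cmod (w - a) \<le> (1 - cmod a) / 4 \<Longrightarrow>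
     cmod (f w - f a) \<le> C * BpK_norm K p s f * (K (1 - (cmod a)\<^sup>2) / (1 - (cmod a)\<^sup>2) powr s) powr (1 / p)"
    using BpK_oscillation[OF p, of K s] K by blast
  show ?thesis
  proof (rule that[of "fact n * 8 ^ n * C"])
    show "0 < fact n * 8 ^ n * C"
      using C by simp
    fix f a
    assume f: "in_BpK K p s f" and a: "a \<in> udisc"
    define \<rho> r W M where "\<rho> = 1 - (cmod a)\<^sup>2" and "r = (1 - cmod a) / 4"
      and "W = K \<rho> / \<rho> powr s" and "M = C * BpK_norm K p s f * W powr (1 / p)"
    have \<rho>: "0 < \<rho>" and r: "0 < r" and W: "0 < W"
      using udisc_weight_pos[OF a] a K by (auto simp: \<rho>_def r_def W_def udisc_def)
    have hol: "f holomorphic_on udisc"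
      using f by (simp add: in_BpK_def)
    have ball: "cball a r \<subseteq> udisc"
      using near_centre_in_udisc[OF a] by (auto simp: r_def dist_norm norm_minus_commute)
    have "(deriv ^^ n) f a = (deriv ^^ n) (\<lambda>w. f w - f a) a"
      using higher_deriv_diff[OF hol holomorphic_on_const, of a n] a n by (simp add: udisc_def)
    also have "cmod \<dots> \<le> fact n * M / r ^ n"
    proof (rule Cauchy_inequality)
      show "(\<lambda>w. f w - f a) holomorphic_on ball a r"
        using ball ball_subset_cball[of a r] by (intro holomorphic_intros holomorphic_on_subset[OF hol]) auto
      show "continuous_on (cball a r) (\<lambda>w. f w - f a)"
        using holomorphic_on_imp_continuous_on[OF holomorphic_on_subset[OF hol ball]]
        by (intro continuous_intros)
      show "cmod (f w - f a) \<le> M" if "cmod (a - w) = r" for w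
        using osc[OF f a, of w] that by (simp add: M_def W_def \<rho>_def r_def norm_minus_commute)
    qed (rule r)
    also have "\<dots> \<le> fact n * M / (\<rho> / 8) ^ n"
      using one_minus_square_le[of "cmod a"] \<rho> C W
      by (intro divide_left_mono power_mono mult_nonneg_nonneg) (auto simp: M_def r_def \<rho>_def BpK_norm_def)
    also have "\<dots> = fact n * 8 ^ n * C * BpK_norm K p s f * (W powr (1 / p) / \<rho> ^ n)"
      by (simp add: M_def power_divide)
    also have "W powr (1 / p) / \<rho> ^ n = (K \<rho> / \<rho> powr (p * real n + s)) powr (1 / p)"
    proof -
      have "(\<rho> powr (p * real n)) powr (1 / p) = \<rho> ^ n"
        using p \<rho> by (simp add: powr_powr powr_realpow)
      then show ?thesis
        using W \<rho> K[OF \<rho>] by (simp add: W_def powr_add powr_divide powr_mult mult.commute)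
    qed
    finally show "cmod ((deriv ^^ n) f a) \<le> fact n * 8 ^ n * C * BpK_norm K p s f *
       (K (1 - (cmod a)\<^sup>2) / (1 - (cmod a)\<^sup>2) powr (p * real n + s)) powr (1 / p)"
      by (simp add: \<rho>_def)
  qed
qed

lemma norm_diff_le_sum_along_ray:
  fixes f :: "complex \<Rightarrow> 'a::real_normed_vector"
  assumes osc: "\<And>b w. b \<in> udisc \<Longrightarrow> cmod (w - b) \<le> (1 - cmod b) / 4 \<Longrightarrow> norm (f w - f b) \<le> \<beta> (cmod b)"
    and a: "cmod a \<le> 1 - (3 / 4) ^ Suc m"
  shows "norm (f a - f 0) \<le> (\<Sum>k\<le>m. \<beta> (1 - (3 / 4) ^ k))"
proof -
  define T where "T = (\<lambda>k. 1 - (3 / 4 :: real) ^ k)"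
  have T: "0 \<le> T k" "T k < 1" "T k \<le> T (Suc k)" for k
    by (auto simp: T_def power_le_one)
  define e where "e = (if a = 0 then 1 else a / of_real (cmod a))"
  have e: "cmod e = 1" "of_real (cmod a) * e = a"
    by (simp_all add: e_def norm_divide)
  have "norm (f (of_real t * e) - f (of_real (T k) * e)) \<le> \<beta> (T k)"
    if "T k \<le> t" "t \<le> T (Suc k)" for k t
  proof -
    have "of_real (T k) * e \<in> udisc" "cmod (of_real (T k) * e) = T k"
      using T[of k] e by (simp_all add: udisc_def norm_mult)
    moreover have "cmod (of_real t * e - of_real (T k) * e) \<le> (1 - T k) / 4"
      using that e by (simp add: T_def norm_mult flip: ring_distribs of_real_diff)
    ultimately show ?thesis
      using osc[of "of_real (T k) * e" "of_real t * e"] by simp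
  qed
  then have "norm (f (of_real (cmod a) * e) - f (of_real 0 * e)) \<le> (\<Sum>k\<le>m. \<beta> (T k))"
    using a by (intro norm_diff_le_sum_of_steps[where T = T and F = "\<lambda>t. f (of_real t * e)"])
      (auto simp: T_def)
  then show ?thesis
    using e by (simp add: T_def)
qed

lemma K_weight_shell_le:
  fixes K :: "real \<Rightarrow> real"
  assumes growth: "\<And>t u. 0 < t \<Longrightarrow> t \<le> u \<Longrightarrow> u \<le> 1 \<Longrightarrow> K u \<le> C * (u / t) powr \<sigma> * K t"
    and K: "\<And>t. 0 < t \<Longrightarrow> 0 < K t" and "0 \<le> C" "\<sigma> \<le> s"
    and km: "k \<le> m" and x: "1 - (3 / 4) ^ m \<le> x" "x < 1"
  defines "\<rho> \<equiv> 1 - x\<^sup>2" and "\<rho>\<^sub>k \<equiv> 1 - (1 - (3 / 4) ^ k)\<^sup>2"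
  shows "K \<rho>\<^sub>k / \<rho>\<^sub>k powr s \<le> C * (2 * (3 / 4) ^ (m - k)) powr (s - \<sigma>) * (K \<rho> / \<rho> powr s)"
proof -
  have "(3 / 4 :: real) ^ k \<le> 1" "(3 / 4 :: real) ^ m \<le> (3 / 4) ^ k"
    using km by (auto intro: power_le_one power_decreasing)
  then have q: "0 \<le> 1 - (3 / 4 :: real) ^ k" "1 - (3 / 4 :: real) ^ k \<le> x"
    using x by linarith+
  then have \<rho>: "0 < \<rho>" "\<rho> \<le> \<rho>\<^sub>k" "\<rho>\<^sub>k \<le> 1"
    using x power_mono[OF q(2) q(1), of 2] by (auto simp: \<rho>_def \<rho>\<^sub>k_def abs_square_less_1)
  have "K \<rho>\<^sub>k / \<rho>\<^sub>k powr s \<le> C * (\<rho> / \<rho>\<^sub>k) powr (s - \<sigma>) * (K \<rho> / \<rho> powr s)"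
    using \<rho> by (intro K_weight_ratio_le[OF growth])
  also have "\<dots> \<le> C * (2 * (3 / 4) ^ (m - k)) powr (s - \<sigma>) * (K \<rho> / \<rho> powr s)"
    using one_minus_square_shell_ratio[OF km x(1)] \<rho> K[OF \<rho>(1)] assms(3,4)
    by (intro mult_right_mono mult_left_mono powr_mono2) (auto simp: \<rho>_def \<rho>\<^sub>k_def)
  finally show ?thesis .
qed

text \<open>As \<sigma> < s, the weights K(\<rho>)/\<rho>^s at the points of the chain decay geometrically towards
  the origin, with ratio (3/4)^((s - \<sigma>)/p) after taking p-th roots.\<close>

lemma BpK_radial_increment:
  assumes p: "0 < p" and K: "standing_K K" and B: "condB K \<sigma>" and \<sigma>: "0 < \<sigma>" "\<sigma> < s"
  obtains C where "0 < C" "\<And>f a. in_BpK K p s f \<Longrightarrow> a \<in> udisc \<Longrightarrow>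
     cmod (f a - f 0) \<le> C * BpK_norm K p s f * (K (1 - (cmod a)\<^sup>2) / (1 - (cmod a)\<^sup>2) powr s) powr (1 / p)"
proof -
  obtain C\<^sub>1 where C\<^sub>1: "0 < C\<^sub>1" and osc: "\<And>f a w. in_BpK K p s f \<Longrightarrow> a \<in> udisc \<Longrightarrow> cmod (w - a) \<le> (1 - cmod a) / 4 \<Longrightarrow>
     cmod (f w - f a) \<le> C\<^sub>1 * BpK_norm K p s f * (K (1 - (cmod a)\<^sup>2) / (1 - (cmod a)\<^sup>2) powr s) powr (1 / p)"
    using BpK_oscillation[OF p, of K s] standing_K_pos[OF K] by blast
  obtain C\<^sub>2 where C\<^sub>2: "0 < C\<^sub>2"
    and growth: "\<And>t u. 0 < t \<Longrightarrow> t \<le> u \<Longrightarrow> u \<le> 1 \<Longrightarrow> K u \<le> C\<^sub>2 * (u / t) powr \<sigma> * K t"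
    using K_le_powr_ratio[OF K B] \<sigma> by (metis less_le)
  define E \<theta> where "E = (s - \<sigma>) / p" and "\<theta> = (3 / 4 :: real) powr E"
  have "0 < E"
    using p \<sigma> by (simp add: E_def)
  then have "(3 / 4 :: real) powr E < 1 powr E"
    by (intro powr_less_mono2) auto
  then have \<theta>: "0 < \<theta>" "\<theta> < 1"
    by (simp_all add: \<theta>_def)
  define C where "C = C\<^sub>1 * C\<^sub>2 powr (1 / p) * 2 powr E / (1 - \<theta>)"
  show ?thesis
  proof (rule that[of C])
    show "0 < C"
      using C\<^sub>1 C\<^sub>2 \<theta> by (simp add: C_def)
    fix f a
    assume f: "in_BpK K p s f" and a: "a \<in> udisc"
    define W where "W = (\<lambda>r. K r / r powr s)"
    define N \<rho> where "N = BpK_norm K p s f" and "\<rho> = 1 - (cmod a)\<^sup>2"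
    have \<rho>: "0 < \<rho>" and N: "0 \<le> N"
      using udisc_weight_pos[OF a] by (simp_all add: \<rho>_def N_def BpK_norm_def)
    have W: "0 < W r" if "0 < r" for r
      using standing_K_pos[OF K that] that by (simp add: W_def)
    obtain m where shell: "1 - (3 / 4) ^ m \<le> cmod a" "cmod a \<le> 1 - (3 / 4) ^ Suc m"
      using exists_geometric_shell[of "cmod a"] a by (auto simp: udisc_def)
    have "cmod (f a - f 0) \<le> (\<Sum>k\<le>m. C\<^sub>1 * N * W (1 - (1 - (3 / 4) ^ k)\<^sup>2) powr (1 / p))"
      using shell(2) osc[OF f] by (intro norm_diff_le_sum_along_ray) (simp_all add: N_def W_def)
    also have "\<dots> \<le> (\<Sum>k\<le>m. C\<^sub>1 * C\<^sub>2 powr (1 / p) * 2 powr E * N * W \<rho> powr (1 / p) * \<theta> ^ (m - k))"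
    proof (intro sum_mono)
      fix k
      have "(3 / 4 :: real) ^ k \<le> 1"
        by (rule power_le_one) auto
      then have \<rho>\<^sub>k: "0 < 1 - (1 - (3 / 4 :: real) ^ k)\<^sup>2"
        by (simp add: abs_square_less_1)
      assume "k \<in> {..m}"
      then have "W (1 - (1 - (3 / 4) ^ k)\<^sup>2) \<le> C\<^sub>2 * (2 * (3 / 4) ^ (m - k)) powr (s - \<sigma>) * W \<rho>"
        unfolding W_def \<rho>_def using C\<^sub>2 \<sigma> shell(1) a standing_K_pos[OF K]
        by (intro K_weight_shell_le[OF growth]) (auto simp: udisc_def)
      then have "W (1 - (1 - (3 / 4) ^ k)\<^sup>2) powr (1 / p) \<le> (C\<^sub>2 * (2 * (3 / 4) ^ (m - k)) powr (s - \<sigma>) * W \<rho>) powr (1 / p)"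
        using p W[OF \<rho>\<^sub>k] by (intro powr_mono2) auto
      also have "\<dots> = C\<^sub>2 powr (1 / p) * 2 powr E * \<theta> ^ (m - k) * W \<rho> powr (1 / p)"
        using C\<^sub>2 W[OF \<rho>]
        by (simp add: powr_mult powr_powr E_def \<theta>_def powr_realpow[symmetric] mult.commute)
      finally show "C\<^sub>1 * N * W (1 - (1 - (3 / 4) ^ k)\<^sup>2) powr (1 / p) \<le> C\<^sub>1 * C\<^sub>2 powr (1 / p) * 2 powr E * N * W \<rho> powr (1 / p) * \<theta> ^ (m - k)"
        using C\<^sub>1 N by (simp add: mult_left_mono mult_ac)
    qed
    also have "\<dots> = C\<^sub>1 * C\<^sub>2 powr (1 / p) * 2 powr E * N * W \<rho> powr (1 / p) * (\<Sum>k\<le>m. \<theta> ^ (m - k))"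
      by (simp add: sum_distrib_left)
    also have "\<dots> \<le> C\<^sub>1 * C\<^sub>2 powr (1 / p) * 2 powr E * N * W \<rho> powr (1 / p) * (1 / (1 - \<theta>))"
      using sum_power_diff_less[OF \<theta>, of m] C\<^sub>1 N by (intro mult_left_mono) auto
    finally show "cmod (f a - f 0) \<le> C * BpK_norm K p s f * (K (1 - (cmod a)\<^sup>2) / (1 - (cmod a)\<^sup>2) powr s) powr (1 / p)"
      by (simp add: C_def N_def W_def \<rho>_def)
  qed
qed

lemma BpK_value_bound:
  assumes p: "0 < p" and K: "standing_K K" and B: "condB K \<sigma>" and \<sigma>: "0 < \<sigma>" "\<sigma> < s"
  obtains C where "0 < C" "\<And>f a. in_BpK K p s f \<Longrightarrow> a \<in> udisc \<Longrightarrow>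
     cmod (f a) \<le> C * BpK_norm K p s f * (K (1 - (cmod a)\<^sup>2) / (1 - (cmod a)\<^sup>2) powr s) powr (1 / p)"
proof -
  obtain C\<^sub>1 where C\<^sub>1: "0 < C\<^sub>1" and increment: "\<And>f a. in_BpK K p s f \<Longrightarrow> a \<in> udisc \<Longrightarrow>
     cmod (f a - f 0) \<le> C\<^sub>1 * BpK_norm K p s f * (K (1 - (cmod a)\<^sup>2) / (1 - (cmod a)\<^sup>2) powr s) powr (1 / p)"
    using BpK_radial_increment[OF p K B \<sigma>] by metis
  obtain C\<^sub>2 where C\<^sub>2: "0 < C\<^sub>2"
    and growth: "\<And>t u. 0 < t \<Longrightarrow> t \<le> u \<Longrightarrow> u \<le> 1 \<Longrightarrow> K u \<le> C\<^sub>2 * (u / t) powr \<sigma> * K t"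
    using K_le_powr_ratio[OF K B] \<sigma> by (metis less_le)
  have K1: "0 < K 1"
    using standing_K_pos[OF K] by simp
  show ?thesis
  proof (rule that[of "(C\<^sub>2 / K 1) powr (1 / p) + C\<^sub>1"])
    show "0 < (C\<^sub>2 / K 1) powr (1 / p) + C\<^sub>1"
      using C\<^sub>1 C\<^sub>2 K1 by (simp add: add_pos_pos)
    fix f a
    assume f: "in_BpK K p s f" and a: "a \<in> udisc"
    define \<rho> W N where "\<rho> = 1 - (cmod a)\<^sup>2" and "W = K \<rho> / \<rho> powr s" and "N = BpK_norm K p s f"
    have \<rho>: "0 < \<rho>" "\<rho> \<le> 1" and N: "0 \<le> N"
      using udisc_weight_pos[OF a] by (simp_all add: \<rho>_def N_def BpK_norm_def)
    have W: "0 < W"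
      using standing_K_pos[OF K \<rho>(1)] \<rho> by (simp add: W_def)
    have "K 1 / 1 powr s \<le> C\<^sub>2 * (\<rho> / 1) powr (s - \<sigma>) * W"
      unfolding W_def using \<rho> by (intro K_weight_ratio_le[OF growth]) auto
    also have "\<dots> \<le> C\<^sub>2 * W"
      using \<rho> \<sigma> C\<^sub>2 W by (intro mult_right_mono) (auto intro: powr_le1)
    finally have "1 \<le> (C\<^sub>2 / K 1 * W) powr (1 / p)"
      using K1 p by (intro ge_one_powr_ge_zero) (auto simp: field_simps)
    have "cmod (f 0) \<le> N"
      using norm_0_le_BpK_norm[OF p, of K s f] f by (simp add: in_BpK_def N_def)
    also have "\<dots> \<le> N * (C\<^sub>2 / K 1 * W) powr (1 / p)"
      using mult_left_mono[OF \<open>1 \<le> (C\<^sub>2 / K 1 * W) powr (1 / p)\<close> N] by simp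
    also have "\<dots> = (C\<^sub>2 / K 1) powr (1 / p) * N * W powr (1 / p)"
      using C\<^sub>2 K1 W by (subst powr_mult) (auto simp: mult_ac)
    finally have "cmod (f 0) \<le> (C\<^sub>2 / K 1) powr (1 / p) * N * W powr (1 / p)" .
    moreover have "cmod (f a - f 0) \<le> C\<^sub>1 * N * W powr (1 / p)"
      using increment[OF f a] by (simp add: N_def W_def \<rho>_def)
    ultimately have "cmod (f a) \<le> ((C\<^sub>2 / K 1) powr (1 / p) + C\<^sub>1) * N * W powr (1 / p)"
      using norm_triangle_sub[of "f a" "f 0"] by (simp add: algebra_simps)
    then show "cmod (f a) \<le> ((C\<^sub>2 / K 1) powr (1 / p) + C\<^sub>1) * BpK_norm K p s f *
        (K (1 - (cmod a)\<^sup>2) / (1 - (cmod a)\<^sup>2) powr s) powr (1 / p)"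
      by (simp add: N_def W_def \<rho>_def)
  qed
qed

theorem lemma3p6:
  fixes K :: "real \<Rightarrow> real" and s p \<sigma> :: real and n :: nat
  assumes "0 < s" "s < 1"
    and "standing_K K"
    and "0 < \<sigma>" "\<sigma> < s" "condB K \<sigma>"
    and "1 + \<sigma> - s < p"
  shows "\<exists>C>0. \<forall>f z. in_BpK K p s f \<longrightarrow> z \<in> udisc \<longrightarrow>
           cmod ((deriv ^^ n) f z)
             \<le> C * BpK_norm K p s f *
               (K (1 - (cmod z)\<^sup>2) / (1 - (cmod z)\<^sup>2) powr (p * real n + s)) powr (1 / p)"
proof -
  \<comment> \<open>the lower bound on p is only needed to ensure p > 0\<close>
  have p: "0 < p"
    using assms by linarith
  show ?thesis
  proof (cases "n = 0")
    case True
    obtain C where "0 < C" and bound: "\<And>f a. in_BpK K p s f \<Longrightarrow> a \<in> udisc \<Longrightarrow>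
        cmod (f a) \<le> C * BpK_norm K p s f * (K (1 - (cmod a)\<^sup>2) / (1 - (cmod a)\<^sup>2) powr s) powr (1 / p)"
      using BpK_value_bound[OF p assms(3,6,4,5)] by metis
    show ?thesis
      using \<open>0 < C\<close> bound True by (intro exI[of _ C]) simp
  next
    case False
    then have "0 < n"
      by simp
    obtain C where "0 < C" and bound: "\<And>f a. in_BpK K p s f \<Longrightarrow> a \<in> udisc \<Longrightarrow>
        cmod ((deriv ^^ n) f a) \<le> C * BpK_norm K p s f *
          (K (1 - (cmod a)\<^sup>2) / (1 - (cmod a)\<^sup>2) powr (p * real n + s)) powr (1 / p)"
      using BpK_higher_deriv_bound[OF p, where K = K and n = n and s = s] standing_K_pos[OF assms(3)] \<open>0 < n\<close>
      by blast
    show ?thesis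
      using \<open>0 < C\<close> bound by blast
  qed
qed

end
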